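(* Let $\mathcal G$ be a groupoid and work in $\mathcal H^r(\mathcal G)$. For all $i,j\in\mathrm{Obj}\,\mathcal G$, $$(S_{1_i}\diamond\mathrm{id}_{1_j})\circ\sigma_{i,j}=(\mathrm{id}_{1_i}\diamond S_{1_j})\circ\sigma_{i,j}.$$ Moreover, for all $g,h\in\mathcal G$ with $\bar g g=1_i$ and $h\bar h=1_j$, setting $$\mu^{-1}_{g,h}=(m_{g,1_i}\diamond m_{1_j,h})\circ\big(\mathrm{id}_g\diamond((\mathrm{id}_{1_i}\diamond S_{1_j})\circ\sigma_{i,j})\diamond\mathrm{id}_h\big):H_g\diamond H_h\to H_g\diamond H_h,$$ one has $\mu_{g,h}\circ\mu^{-1}_{g,h}=\mathrm{id}_{H_g\diamond H_h}=\mu^{-1}_{g,h}\circ\mu_{g,h}$.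
   Context: Groupoid conventions: a groupoid $\mathcal G$ is a small category in which every morphism is invertible; $\mathcal G(i,j)$ denotes the morphisms from $i$ to $j$; composition left to right ($g\in\mathcal G(i,j)$, $h\in\mathcal G(j,k)$ give $gh\in\mathcal G(i,k)$); $1_i$ identity, $\bar g$ inverse (so $g\bar g=1_i$, $\bar gg=1_j$ for $g\in\mathcal G(i,j)$). Braided monoidal categories: product $\diamond$, unit $\mathbf 1$, braiding $\gamma_{A,B}$, $\bar\gamma_{A,B}:=\gamma_{B,A}^{-1}$; constraints suppressed; $\mathrm{id}_g=\mathrm{id}_{H_g}$, $\gamma_{g,h}=\gamma_{H_g,H_h}$, $\bar\gamma_{g,h}=\bar\gamma_{H_g,H_h}$. $\mathcal H^r(\mathcal G)$ is the braided monoidal category freely generated by objects $H_g$ ($g\in\mathcal G$) and morphisms $\Delta_g:H_g\to H_g\diamond H_g$, $\epsilon_g:H_g\to\mathbf 1$, $m_{g,h}:H_g\diamond H_h\to H_{gh}$, $\eta_i:\mathbf 1\to H_{1_i}$, $S_g,\bar S_g:H_g\to H_{\bar g}$, $l_i:H_{1_i}\to\mathbf 1$, $L_g:\mathbf 1\to H_g$, $v_g,v_g^{-1}:H_g\to H_g$, subject to (composable labels, $g\in\mathcal G(i,j)$): (Hopf) $\Delta$ coassociative; $(\epsilon_g\diamond\mathrm{id})\Delta_g=\mathrm{id}_g=(\mathrm{id}\diamond\epsilon_g)\Delta_g$; $m$ associative; $m_{g,1_j}(\mathrm{id}_g\diamond\eta_j)=\mathrm{id}_g=m_{1_i,g}(\eta_i\diamond\mathrm{id}_g)$;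 $(m_{g,h}\diamond m_{g,h})(\mathrm{id}_g\diamond\gamma_{g,h}\diamond\mathrm{id}_h)(\Delta_g\diamond\Delta_h)=\Delta_{gh}m_{g,h}$; $\epsilon_{gh}m_{g,h}=\epsilon_g\diamond\epsilon_h$; $\Delta_{1_i}\eta_i=\eta_i\diamond\eta_i$; $\epsilon_{1_i}\eta_i=\mathrm{id}_{\mathbf 1}$; $m_{\bar g,g}(S_g\diamond\mathrm{id}_g)\Delta_g=\eta_j\epsilon_g$; $m_{g,\bar g}(\mathrm{id}_g\diamond S_g)\Delta_g=\eta_i\epsilon_g$; $S_{\bar g}\bar S_g=\bar S_{\bar g}S_g=\mathrm{id}_g$. (Integrals) $(\mathrm{id}_{1_i}\diamond l_i)\Delta_{1_i}=\eta_il_i$; $m_{g,h}(L_g\diamond\mathrm{id}_h)=L_{gh}\epsilon_h$; $l_iL_{1_i}=\mathrm{id}_{\mathbf 1}=l_iS_{1_i}L_{1_i}$; $S_gL_g=L_{\bar g}$; $l_iS_{1_i}=l_i$. (Ribbon) $v_gv_g^{-1}=v_g^{-1}v_g=\mathrm{id}_g$; $\epsilon_gv_g=\epsilon_g$; $v_gL_g=L_g$; $S_gv_g=v_{\bar g}S_g$; $m_{g,h}(v_g\diamond\mathrm{id}_h)=v_{gh}m_{g,h}=m_{g,h}(\mathrm{id}_g\diamond v_h)$. The copairings are $\sigma_{i,i}=(v_{1_i}^{-1}\diamond(v_{1_i}^{-1}S_{1_i}))\Delta_{1_i}v_{1_i}\eta_i:\mathbf 1\to H_{1_i}\diamond H_{1_i}$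 and $\sigma_{i,j}=\eta_i\diamond\eta_j$ for $i\neq j$. For $g\in\mathcal G(p,q)$, $h\in\mathcal G(r,s)$, $k\in\mathrm{Obj}\,\mathcal G$: $\mu_{g,h}=(m_{g,1_q}\diamond m_{1_r,h})(\mathrm{id}_g\diamond\sigma_{q,r}\diamond\mathrm{id}_h)$, $\rho^r_{g,k}=(m_{g,1_q}\diamond\mathrm{id}_{1_k})(\mathrm{id}_g\diamond\sigma_{q,k})$, $\rho^l_{g,k}=(\mathrm{id}_{1_k}\diamond m_{1_p,g})(\sigma_{k,p}\diamond\mathrm{id}_g)$. Required: each $\sigma_{i,j}$ is a Hopf copairing: $(\Delta_{1_i}\diamond\mathrm{id}_{1_j})\sigma_{i,j}=(\mathrm{id}_{1_i}\diamond\mathrm{id}_{1_i}\diamond m_{1_j,1_j})(\mathrm{id}_{1_i}\diamond\sigma_{i,j}\diamond\mathrm{id}_{1_j})\sigma_{i,j}$, $(\mathrm{id}_{1_i}\diamond\Delta_{1_j})\sigma_{i,j}=(m_{1_i,1_i}\diamond\mathrm{id}_{1_j}\diamond\mathrm{id}_{1_j})(\mathrm{id}_{1_i}\diamond\sigma_{i,j}\diamond\mathrm{id}_{1_j})\sigma_{i,j}$, $(\epsilon_{1_i}\diamond\mathrm{id}_{1_j})\sigma_{i,j}=\eta_j$, $(\mathrm{id}_{1_i}\diamond\epsilon_{1_j})\sigma_{i,j}=\eta_i$; $\Delta_gv_g^{-1}=\mu_{g,g}(v_g^{-1}\diamond v_g^{-1})\bar\gamma_{g,g}\Delta_g$; and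 for all $g\in\mathcal G(p,i)$, $h\in\mathcal G(j,s)$: $(m_{1_j,h}\diamond m_{g,1_i})(S_{1_j}\diamond(\mu_{h,g}\bar\gamma_{g,h}\mu_{g,h})\diamond S_{1_i})(\rho^l_{g,j}\diamond\rho^r_{h,i})=\gamma_{g,h}$. *)

theory Defs
  imports Main
begin

text \<open>A groupoid with objects of type 'o and morphisms of type 'g (every element of
the type is a morphism). Composition is written left to right, as in the paper:
gcomp g h is defined when tgt g = src h.\<close>

record ('o, 'g) grpd =
  src   :: "'g \<Rightarrow> 'o"
  tgt   :: "'g \<Rightarrow> 'o"
  gcomp :: "'g \<Rightarrow> 'g \<Rightarrow> 'g"
  gid   :: "'o \<Rightarrow> 'g"
  ginv  :: "'g \<Rightarrow> 'g"

definition groupoid :: "('o, 'g) grpd \<Rightarrow> bool" where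
  "groupoid G \<longleftrightarrow>
     (\<forall>i. src G (gid G i) = i \<and> tgt G (gid G i) = i) \<and>
     (\<forall>g h. tgt G g = src G h \<longrightarrow>
        src G (gcomp G g h) = src G g \<and> tgt G (gcomp G g h) = tgt G h) \<and>
     (\<forall>g h k. tgt G g = src G h \<longrightarrow> tgt G h = src G k \<longrightarrow>
        gcomp G (gcomp G g h) k = gcomp G g (gcomp G h k)) \<and>
     (\<forall>g. gcomp G (gid G (src G g)) g = g \<and> gcomp G g (gid G (tgt G g)) = g) \<and>
     (\<forall>g. src G (ginv G g) = tgt G g \<and> tgt G (ginv G g) = src G g \<and>
        gcomp G g (ginv G g) = gid G (src G g) \<and> gcomp G (ginv G g) g = gid G (tgt G g))"

text \<open>Objects of type 'c, morphisms of type 'm (every element is a morphism).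
cmp f g is the usual composite f \<circ> g (g first), defined when cdom f = ccod g.
brinv A B is the inverse of the braiding br A B.\<close>

record ('c, 'm) bmc =
  cdom  :: "'m \<Rightarrow> 'c"
  ccod  :: "'m \<Rightarrow> 'c"
  cmp   :: "'m \<Rightarrow> 'm \<Rightarrow> 'm"
  cid   :: "'c \<Rightarrow> 'm"
  otn   :: "'c \<Rightarrow> 'c \<Rightarrow> 'c"
  mtn   :: "'m \<Rightarrow> 'm \<Rightarrow> 'm"
  cunit :: "'c"
  br    :: "'c \<Rightarrow> 'c \<Rightarrow> 'm"
  brinv :: "'c \<Rightarrow> 'c \<Rightarrow> 'm"

definition strict_braided_monoidal :: "('c, 'm) bmc \<Rightarrow> bool" where
  "strict_braided_monoidal C \<longleftrightarrow>
     \<comment> \<open>category\<close>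
     (\<forall>A. cdom C (cid C A) = A \<and> ccod C (cid C A) = A) \<and>
     (\<forall>f g. cdom C f = ccod C g \<longrightarrow>
        cdom C (cmp C f g) = cdom C g \<and> ccod C (cmp C f g) = ccod C f) \<and>
     (\<forall>f g h. cdom C f = ccod C g \<longrightarrow> cdom C g = ccod C h \<longrightarrow>
        cmp C (cmp C f g) h = cmp C f (cmp C g h)) \<and>
     (\<forall>f. cmp C f (cid C (cdom C f)) = f \<and> cmp C (cid C (ccod C f)) f = f) \<and>
     \<comment> \<open>strict monoidal structure\<close>
     (\<forall>A B D. otn C (otn C A B) D = otn C A (otn C B D)) \<and>
     (\<forall>A. otn C (cunit C) A = A \<and> otn C A (cunit C) = A) \<and>
     (\<forall>f g. cdom C (mtn C f g) = otn C (cdom C f) (cdom C g) \<and>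
            ccod C (mtn C f g) = otn C (ccod C f) (ccod C g)) \<and>
     (\<forall>f g h. mtn C (mtn C f g) h = mtn C f (mtn C g h)) \<and>
     (\<forall>f. mtn C (cid C (cunit C)) f = f \<and> mtn C f (cid C (cunit C)) = f) \<and>
     (\<forall>A B. mtn C (cid C A) (cid C B) = cid C (otn C A B)) \<and>
     (\<forall>f f' g g'. cdom C f = ccod C f' \<longrightarrow> cdom C g = ccod C g' \<longrightarrow>
        cmp C (mtn C f g) (mtn C f' g') = mtn C (cmp C f f') (cmp C g g')) \<and>
     \<comment> \<open>braiding\<close>
     (\<forall>A B. cdom C (br C A B) = otn C A B \<and> ccod C (br C A B) = otn C B A) \<and>
     (\<forall>A B. cdom C (brinv C A B) = otn C B A \<and> ccod C (brinv C A B) = otn C A B \<and>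
        cmp C (br C A B) (brinv C A B) = cid C (otn C B A) \<and>
        cmp C (brinv C A B) (br C A B) = cid C (otn C A B)) \<and>
     (\<forall>f g. cmp C (br C (ccod C f) (ccod C g)) (mtn C f g) =
            cmp C (mtn C g f) (br C (cdom C f) (cdom C g))) \<and>
     (\<forall>A B D. br C A (otn C B D) =
          cmp C (mtn C (cid C B) (br C A D)) (mtn C (br C A B) (cid C D)) \<and>
        br C (otn C A B) D =
          cmp C (mtn C (br C A D) (cid C B)) (mtn C (cid C A) (br C B D)))"

record ('o, 'g, 'c, 'm) hr =
  HH  :: "'g \<Rightarrow> 'c"
  Dl  :: "'g \<Rightarrow> 'm"
  ep  :: "'g \<Rightarrow> 'm"
  mm  :: "'g \<Rightarrow> 'g \<Rightarrow> 'm"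
  et  :: "'o \<Rightarrow> 'm"
  SS  :: "'g \<Rightarrow> 'm"
  SSb :: "'g \<Rightarrow> 'm"
  ll  :: "'o \<Rightarrow> 'm"
  LL  :: "'g \<Rightarrow> 'm"
  vv  :: "'g \<Rightarrow> 'm"
  vvi :: "'g \<Rightarrow> 'm"

locale hr_syntax =
  fixes G :: "('o, 'g) grpd" and C :: "('c, 'm) bmc" and X :: "('o, 'g, 'c, 'm) hr"
begin

abbreviation one :: "'o \<Rightarrow> 'g" where "one i \<equiv> gid G i"
abbreviation gb :: "'g \<Rightarrow> 'g" where "gb g \<equiv> ginv G g"
abbreviation gm :: "'g \<Rightarrow> 'g \<Rightarrow> 'g" where "gm g h \<equiv> gcomp G g h"
abbreviation H :: "'g \<Rightarrow> 'c" where "H g \<equiv> HH X g"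
abbreviation I :: "'c" where "I \<equiv> cunit C"
abbreviation ot :: "'c \<Rightarrow> 'c \<Rightarrow> 'c" where "ot A B \<equiv> otn C A B"
abbreviation idg :: "'g \<Rightarrow> 'm" where "idg g \<equiv> cid C (HH X g)"
abbreviation co :: "'m \<Rightarrow> 'm \<Rightarrow> 'm" (infixr "\<cdot>" 55) where "f \<cdot> g \<equiv> cmp C f g"
abbreviation tn :: "'m \<Rightarrow> 'm \<Rightarrow> 'm" (infixr "\<diamond>" 65) where "f \<diamond> g \<equiv> mtn C f g"
abbreviation hom :: "'m \<Rightarrow> 'c \<Rightarrow> 'c \<Rightarrow> bool" where
  "hom f A B \<equiv> cdom C f = A \<and> ccod C f = B"
abbreviation gam :: "'g \<Rightarrow> 'g \<Rightarrow> 'm" where "gam g h \<equiv> br C (HH X g) (HH X h)"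
abbreviation gamb :: "'g \<Rightarrow> 'g \<Rightarrow> 'm" where "gamb g h \<equiv> brinv C (HH X h) (HH X g)"
abbreviation Delta where "Delta \<equiv> Dl X"
abbreviation eps where "eps \<equiv> ep X"
abbreviation m where "m \<equiv> mm X"
abbreviation eta where "eta \<equiv> et X"
abbreviation S where "S \<equiv> SS X"
abbreviation Sb where "Sb \<equiv> SSb X"
abbreviation l where "l \<equiv> ll X"
abbreviation L where "L \<equiv> LL X"
abbreviation v where "v \<equiv> vv X"
abbreviation vi where "vi \<equiv> vvi X"

definition sigma :: "'o \<Rightarrow> 'o \<Rightarrow> 'm" where
  "sigma i j = (if i = j
     then (vi (one i) \<diamond> (vi (one i) \<cdot> S (one i))) \<cdot> Delta (one i) \<cdot> v (one i) \<cdot> eta i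
     else eta i \<diamond> eta j)"

definition mu :: "'g \<Rightarrow> 'g \<Rightarrow> 'm" where
  "mu g h = (m g (one (tgt G g)) \<diamond> m (one (src G h)) h) \<cdot>
            (idg g \<diamond> sigma (tgt G g) (src G h) \<diamond> idg h)"

definition rho_r :: "'g \<Rightarrow> 'o \<Rightarrow> 'm" where
  "rho_r g k = (m g (one (tgt G g)) \<diamond> idg (one k)) \<cdot> (idg g \<diamond> sigma (tgt G g) k)"

definition rho_l :: "'g \<Rightarrow> 'o \<Rightarrow> 'm" where
  "rho_l g k = (idg (one k) \<diamond> m (one (src G g)) g) \<cdot> (sigma k (src G g) \<diamond> idg g)"

end

text \<open>A model of the relations of H^r(G) in a strict braided monoidal category.
Equations between composites of generators hold in the freely generated braided
monoidal category H^r(G) iff they hold in every such model.\<close>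

locale Hr_model = hr_syntax G C X
  for G :: "('o, 'g) grpd" and C :: "('c, 'm) bmc" and X :: "('o, 'g, 'c, 'm) hr" +
  assumes grpd: "groupoid G"
    and cat: "strict_braided_monoidal C"
    and ty_Delta: "\<And>g. hom (Delta g) (H g) (ot (H g) (H g))"
    and ty_eps: "\<And>g. hom (eps g) (H g) I"
    and ty_m: "\<And>g h. tgt G g = src G h \<Longrightarrow> hom (m g h) (ot (H g) (H h)) (H (gm g h))"
    and ty_eta: "\<And>i. hom (eta i) I (H (one i))"
    and ty_S: "\<And>g. hom (S g) (H g) (H (gb g))"
    and ty_Sb: "\<And>g. hom (Sb g) (H g) (H (gb g))"
    and ty_l: "\<And>i. hom (l i) (H (one i)) I"
    and ty_L: "\<And>g. hom (L g) I (H g)"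
    and ty_v: "\<And>g. hom (v g) (H g) (H g)"
    and ty_vi: "\<And>g. hom (vi g) (H g) (H g)"
    and coassoc: "\<And>g. (Delta g \<diamond> idg g) \<cdot> Delta g = (idg g \<diamond> Delta g) \<cdot> Delta g"
    and counit: "\<And>g. (eps g \<diamond> idg g) \<cdot> Delta g = idg g \<and> (idg g \<diamond> eps g) \<cdot> Delta g = idg g"
    and massoc: "\<And>g h k. tgt G g = src G h \<Longrightarrow> tgt G h = src G k \<Longrightarrow>
        m (gm g h) k \<cdot> (m g h \<diamond> idg k) = m g (gm h k) \<cdot> (idg g \<diamond> m h k)"
    and munit: "\<And>g. m g (one (tgt G g)) \<cdot> (idg g \<diamond> eta (tgt G g)) = idg g \<and>
        m (one (src G g)) g \<cdot> (eta (src G g) \<diamond> idg g) = idg g"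
    and bialg: "\<And>g h. tgt G g = src G h \<Longrightarrow>
        (m g h \<diamond> m g h) \<cdot> (idg g \<diamond> gam g h \<diamond> idg h) \<cdot> (Delta g \<diamond> Delta h) = Delta (gm g h) \<cdot> m g h"
    and eps_m: "\<And>g h. tgt G g = src G h \<Longrightarrow> eps (gm g h) \<cdot> m g h = eps g \<diamond> eps h"
    and Delta_eta: "\<And>i. Delta (one i) \<cdot> eta i = eta i \<diamond> eta i"
    and eps_eta: "\<And>i. eps (one i) \<cdot> eta i = cid C I"
    and antipode_l: "\<And>g. m (gb g) g \<cdot> (S g \<diamond> idg g) \<cdot> Delta g = eta (tgt G g) \<cdot> eps g"
    and antipode_r: "\<And>g. m g (gb g) \<cdot> (idg g \<diamond> S g) \<cdot> Delta g = eta (src G g) \<cdot> eps g"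
    and S_inv: "\<And>g. S (gb g) \<cdot> Sb g = idg g \<and> Sb (gb g) \<cdot> S g = idg g"
    and int_l: "\<And>i. (idg (one i) \<diamond> l i) \<cdot> Delta (one i) = eta i \<cdot> l i"
    and int_L: "\<And>g h. tgt G g = src G h \<Longrightarrow> m g h \<cdot> (L g \<diamond> idg h) = L (gm g h) \<cdot> eps h"
    and lL: "\<And>i. l i \<cdot> L (one i) = cid C I \<and> l i \<cdot> S (one i) \<cdot> L (one i) = cid C I"
    and SL: "\<And>g. S g \<cdot> L g = L (gb g)"
    and lS: "\<And>i. l i \<cdot> S (one i) = l i"
    and v_inv: "\<And>g. v g \<cdot> vi g = idg g \<and> vi g \<cdot> v g = idg g"
    and eps_v: "\<And>g. eps g \<cdot> v g = eps g"
    and v_L: "\<And>g. v g \<cdot> L g = L g"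
    and S_v: "\<And>g. S g \<cdot> v g = v (gb g) \<cdot> S g"
    and m_v: "\<And>g h. tgt G g = src G h \<Longrightarrow>
        m g h \<cdot> (v g \<diamond> idg h) = v (gm g h) \<cdot> m g h \<and> v (gm g h) \<cdot> m g h = m g h \<cdot> (idg g \<diamond> v h)"
    and copair_Delta_l: "\<And>i j. (Delta (one i) \<diamond> idg (one j)) \<cdot> sigma i j =
        (idg (one i) \<diamond> idg (one i) \<diamond> m (one j) (one j)) \<cdot> (idg (one i) \<diamond> sigma i j \<diamond> idg (one j)) \<cdot> sigma i j"
    and copair_Delta_r: "\<And>i j. (idg (one i) \<diamond> Delta (one j)) \<cdot> sigma i j =
        (m (one i) (one i) \<diamond> idg (one j) \<diamond> idg (one j)) \<cdot> (idg (one i) \<diamond> sigma i j \<diamond> idg (one j)) \<cdot> sigma i j"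
    and copair_eps_l: "\<And>i j. (eps (one i) \<diamond> idg (one j)) \<cdot> sigma i j = eta j"
    and copair_eps_r: "\<And>i j. (idg (one i) \<diamond> eps (one j)) \<cdot> sigma i j = eta i"
    and Delta_vi: "\<And>g. Delta g \<cdot> vi g = mu g g \<cdot> (vi g \<diamond> vi g) \<cdot> gamb g g \<cdot> Delta g"
    and gamma_rel: "\<And>g h. (m (one (src G h)) h \<diamond> m g (one (tgt G g))) \<cdot>
        (S (one (src G h)) \<diamond> (mu h g \<cdot> gamb g h \<cdot> mu g h) \<diamond> S (one (tgt G g))) \<cdot>
        (rho_l g (src G h) \<diamond> rho_r h (tgt G g)) = gam g h"

end

theory Submission
  imports Defs
begin

(* Points x : 1 -> H_{1_i} <> H_{1_j} form a monoid under x * y = (m <> m)(id <> x <> id) y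
   with unit eta_i <> eta_j, and the map x |-> (m_{g,1_i} <> m_{1_j,h})(id_g <> x <> id_h)
   into End(H_g <> H_h) is multiplicative and unital; mu_{g,h} is the image of sigma_{i,j}.
   The copairing axioms together with the antipode axiom make (S <> id) sigma a right and
   (id <> S) sigma a left inverse of sigma, so the two coincide and their common image is a
   two-sided inverse of mu_{g,h}. *)

locale strict_bmc =
  fixes C :: "('c, 'm) bmc"
  assumes strict_braided_monoidal: "strict_braided_monoidal C"
begin

lemma cdom_cid [simp]: "cdom C (cid C A) = A"
  and ccod_cid [simp]: "ccod C (cid C A) = A"
  using strict_braided_monoidal unfolding strict_braided_monoidal_def by auto

lemma cdom_cmp [simp]: "cdom C f = ccod C g \<Longrightarrow> cdom C (cmp C f g) = cdom C g"
  and ccod_cmp [simp]: "cdom C f = ccod C g \<Longrightarrow> ccod C (cmp C f g) = ccod C f"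
  using strict_braided_monoidal unfolding strict_braided_monoidal_def by auto

lemma cmp_assoc:
  "cdom C f = ccod C g \<Longrightarrow> cdom C g = ccod C h \<Longrightarrow> cmp C (cmp C f g) h = cmp C f (cmp C g h)"
  using strict_braided_monoidal unfolding strict_braided_monoidal_def by auto

lemma cmp_cid_right [simp]: "cdom C f = A \<Longrightarrow> cmp C f (cid C A) = f"
  and cmp_cid_left [simp]: "ccod C f = A \<Longrightarrow> cmp C (cid C A) f = f"
  using strict_braided_monoidal unfolding strict_braided_monoidal_def by auto

lemma otn_assoc [simp]: "otn C (otn C A B) D = otn C A (otn C B D)"
  and otn_unit [simp]: "otn C (cunit C) A = A" "otn C A (cunit C) = A"
  using strict_braided_monoidal unfolding strict_braided_monoidal_def by auto

lemma cdom_mtn [simp]: "cdom C (mtn C f g) = otn C (cdom C f) (cdom C g)"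
  and ccod_mtn [simp]: "ccod C (mtn C f g) = otn C (ccod C f) (ccod C g)"
  using strict_braided_monoidal unfolding strict_braided_monoidal_def by auto

lemma mtn_assoc [simp]: "mtn C (mtn C f g) h = mtn C f (mtn C g h)"
  and mtn_unit [simp]: "mtn C (cid C (cunit C)) f = f" "mtn C f (cid C (cunit C)) = f"
  and mtn_cid [simp]: "mtn C (cid C A) (cid C B) = cid C (otn C A B)"
  using strict_braided_monoidal unfolding strict_braided_monoidal_def by auto

lemma mtn_cid_cid [simp]: "mtn C (cid C A) (mtn C (cid C B) f) = mtn C (cid C (otn C A B)) f"
  by (metis mtn_assoc mtn_cid)

lemma interchange:
  "cdom C f = ccod C f' \<Longrightarrow> cdom C g = ccod C g' \<Longrightarrow>
    cmp C (mtn C f g) (mtn C f' g') = mtn C (cmp C f f') (cmp C g g')"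
  using strict_braided_monoidal unfolding strict_braided_monoidal_def by auto

lemma cmp_reassoc:
  "cmp C f g = h \<Longrightarrow> cdom C f = ccod C g \<Longrightarrow> cdom C g = ccod C k \<Longrightarrow>
    cmp C f (cmp C g k) = cmp C h k"
  using cmp_assoc by metis

lemma whisker_cmp:
  "cdom C f = ccod C g \<Longrightarrow>
    mtn C (cid C A) (mtn C (cmp C f g) (cid C B)) =
    cmp C (mtn C (cid C A) (mtn C f (cid C B))) (mtn C (cid C A) (mtn C g (cid C B)))"
  by (simp add: interchange)

lemma point_mtn_cmp:
  "cdom C x = cunit C \<Longrightarrow> cdom C f = ccod C g \<Longrightarrow> cmp C (mtn C x f) g = mtn C x (cmp C f g)"
  by (metis interchange mtn_unit(1) cmp_cid_right ccod_cid)

lemma mtn_point_cmp: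
  "cdom C x = cunit C \<Longrightarrow> cdom C f = ccod C g \<Longrightarrow> cmp C (mtn C f x) g = mtn C (cmp C f g) x"
  by (metis interchange mtn_unit(2) cmp_cid_right ccod_cid)

end

lemma groupoid_src_gid [simp]: "groupoid G \<Longrightarrow> src G (gid G i) = i"
  and groupoid_tgt_gid [simp]: "groupoid G \<Longrightarrow> tgt G (gid G i) = i"
  and groupoid_gcomp_gid_right [simp]: "groupoid G \<Longrightarrow> tgt G g = i \<Longrightarrow> gcomp G g (gid G i) = g"
  and groupoid_gcomp_gid_left [simp]: "groupoid G \<Longrightarrow> src G g = i \<Longrightarrow> gcomp G (gid G i) g = g"
  unfolding groupoid_def by auto

lemma groupoid_ginv_gid [simp]: "groupoid G \<Longrightarrow> ginv G (gid G i) = gid G i"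
  by (metis groupoid_def groupoid_src_gid)

lemma groupoid_tgt_eq_if_ginv_gcomp:
  "groupoid G \<Longrightarrow> gcomp G (ginv G g) g = gid G i \<Longrightarrow> tgt G g = i"
  by (metis groupoid_def groupoid_src_gid)

lemma groupoid_src_eq_if_gcomp_ginv:
  "groupoid G \<Longrightarrow> gcomp G g (ginv G g) = gid G j \<Longrightarrow> src G g = j"
  by (metis groupoid_def groupoid_src_gid)

sublocale Hr_model \<subseteq> strict_bmc C
  by unfold_locales (rule cat)

context Hr_model
begin

lemmas [simp] = grpd ty_Delta ty_eps ty_m ty_eta ty_S ty_v ty_vi

lemma cdom_sigma [simp]: "cdom C (sigma i j) = I"
  and ccod_sigma [simp]: "ccod C (sigma i j) = ot (H (one i)) (H (one j))"
  by (simp_all add: sigma_def)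

definition mu_with :: "'g \<Rightarrow> 'g \<Rightarrow> 'm \<Rightarrow> 'm" where
  "mu_with g h x = (m g (one (tgt G g)) \<diamond> m (one (src G h)) h) \<cdot> (idg g \<diamond> x \<diamond> idg h)"

lemma mu_eq_mu_with: "mu g h = mu_with g h (sigma (tgt G g) (src G h))"
  by (simp add: mu_def mu_with_def)

lemma hom_mu_with [simp]:
  assumes "hom x I (ot (H (one (tgt G g))) (H (one (src G h))))"
  shows "hom (mu_with g h x) (ot (H g) (H h)) (ot (H g) (H h))"
  using assms by (simp add: mu_with_def)

lemma mu_with_mult:
  assumes x: "hom x I (ot (H (one i)) (H (one j)))"
    and y: "hom y I (ot (H (one i)) (H (one j)))"
    and g: "tgt G g = i" and h: "src G h = j"
  shows "mu_with g h x \<cdot> mu_with g h y = mu_with g h (mu_with (one i) (one j) x \<cdot> y)"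
proof -
  let ?mg = "m g (one i)" and ?mh = "m (one j) h"
  let ?mi = "m (one i) (one i)" and ?mj = "m (one j) (one j)"
  let ?A = "H (one i)" and ?B = "H (one j)"
  let ?x = "cid C (ot (H g) ?A) \<diamond> x \<diamond> cid C (ot ?B (H h))" and ?y = "idg g \<diamond> y \<diamond> idg h"
  have slide: "(idg g \<diamond> x \<diamond> idg h) \<cdot> (?mg \<diamond> ?mh) =
      (?mg \<diamond> cid C (ot ?A ?B) \<diamond> ?mh) \<cdot> ?x"
    using x g h by (simp add: interchange point_mtn_cmp)
  have assoc_g: "?mg \<cdot> (?mg \<diamond> idg (one i)) = ?mg \<cdot> (idg g \<diamond> ?mi)"
    using massoc[of g "one i" "one i"] g by simp
  have assoc_h: "?mh \<cdot> (idg (one j) \<diamond> ?mh) = ?mh \<cdot> (?mj \<diamond> idg h)"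
    using massoc[of "one j" "one j" h] h by simp
  have "(?mg \<diamond> ?mh) \<cdot> ((?mg \<diamond> idg (one i)) \<diamond> (idg (one j) \<diamond> ?mh)) =
      (?mg \<cdot> (?mg \<diamond> idg (one i))) \<diamond> (?mh \<cdot> (idg (one j) \<diamond> ?mh))"
    by (rule interchange) (use g h in simp_all)
  also have "\<dots> = (?mg \<cdot> (idg g \<diamond> ?mi)) \<diamond> (?mh \<cdot> (?mj \<diamond> idg h))"
    by (simp only: assoc_g assoc_h)
  also have "\<dots> = (?mg \<diamond> ?mh) \<cdot> ((idg g \<diamond> ?mi) \<diamond> (?mj \<diamond> idg h))"
    by (rule interchange[symmetric]) (use g h in simp_all)
  finally have reassoc: "(?mg \<diamond> ?mh) \<cdot> (?mg \<diamond> cid C (ot ?A ?B) \<diamond> ?mh) =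
      (?mg \<diamond> ?mh) \<cdot> (idg g \<diamond> ?mi \<diamond> ?mj \<diamond> idg h)"
    by simp
  have collect: "(idg g \<diamond> ?mi \<diamond> ?mj \<diamond> idg h) \<cdot> ?x \<cdot> ?y =
      idg g \<diamond> (mu_with (one i) (one j) x \<cdot> y) \<diamond> idg h"
    using x y by (simp add: mu_with_def whisker_cmp cmp_assoc)
  have "mu_with g h x \<cdot> mu_with g h y =
      (?mg \<diamond> ?mh) \<cdot> ((idg g \<diamond> x \<diamond> idg h) \<cdot> (?mg \<diamond> ?mh)) \<cdot> ?y"
    using x y g h by (simp add: mu_with_def cmp_assoc)
  also have "\<dots> = ((?mg \<diamond> ?mh) \<cdot> (?mg \<diamond> cid C (ot ?A ?B) \<diamond> ?mh)) \<cdot> ?x \<cdot> ?y"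
    using x y g h by (simp only: slide) (simp add: cmp_assoc)
  also have "\<dots> = (?mg \<diamond> ?mh) \<cdot> (idg g \<diamond> ?mi \<diamond> ?mj \<diamond> idg h) \<cdot> ?x \<cdot> ?y"
    using x y g h by (simp only: reassoc) (simp add: cmp_assoc)
  also have "\<dots> = mu_with g h (mu_with (one i) (one j) x \<cdot> y)"
    using g h by (simp only: collect) (simp add: mu_with_def)
  finally show ?thesis .
qed

lemma mu_with_unit:
  assumes g: "tgt G g = i" and h: "src G h = j"
  shows "mu_with g h (eta i \<diamond> eta j) = cid C (ot (H g) (H h))"
proof -
  have "mu_with g h (eta i \<diamond> eta j) =
      (m g (one i) \<diamond> m (one j) h) \<cdot> ((idg g \<diamond> eta i) \<diamond> (eta j \<diamond> idg h))"
    by (simp add: mu_with_def g h)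
  also have "\<dots> = (m g (one i) \<cdot> (idg g \<diamond> eta i)) \<diamond> (m (one j) h \<cdot> (eta j \<diamond> idg h))"
    by (rule interchange) (use g h in simp_all)
  also have "\<dots> = idg g \<diamond> idg h"
    using munit[of g] munit[of h] g h by simp
  finally show ?thesis by simp
qed

lemma mu_with_eta_eta:
  assumes x: "hom x I (ot (H (one i)) (H (one j)))"
  shows "mu_with (one i) (one j) x \<cdot> (eta i \<diamond> eta j) = x"
proof -
  let ?M = "m (one i) (one i) \<diamond> m (one j) (one j)"
  have unit: "?M \<cdot> ((eta i \<diamond> idg (one i)) \<diamond> (idg (one j) \<diamond> eta j)) = idg (one i) \<diamond> idg (one j)"
    by (subst interchange) (use munit[of "one i"] munit[of "one j"] in simp_all)
  have "mu_with (one i) (one j) x \<cdot> (eta i \<diamond> eta j) = ?M \<cdot> (eta i \<diamond> x \<diamond> eta j)"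
    using x by (simp add: mu_with_def cmp_assoc interchange point_mtn_cmp)
  also have "\<dots> = (?M \<cdot> ((eta i \<diamond> idg (one i)) \<diamond> (idg (one j) \<diamond> eta j))) \<cdot> x"
    using x by (simp add: cmp_assoc point_mtn_cmp mtn_point_cmp)
  also have "\<dots> = x"
    unfolding unit using x by simp
  finally show ?thesis .
qed

lemma sigma_right_inverse:
  "mu_with (one i) (one j) (sigma i j) \<cdot> (S (one i) \<diamond> idg (one j)) \<cdot> sigma i j = eta i \<diamond> eta j"
proof -
  let ?A = "H (one i)" and ?B = "H (one j)"
  let ?M = "m (one i) (one i) \<diamond> m (one j) (one j)" and ?X = "idg (one i) \<diamond> sigma i j \<diamond> idg (one j)"
  let ?Si = "m (one i) (one i) \<cdot> (S (one i) \<diamond> idg (one i))"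
  have slide: "?X \<cdot> (S (one i) \<diamond> idg (one j)) = (S (one i) \<diamond> cid C (ot ?A (ot ?B ?B))) \<cdot> ?X"
    by (simp add: interchange)
  have split: "?M \<cdot> (S (one i) \<diamond> cid C (ot ?A (ot ?B ?B))) =
      (?Si \<diamond> idg (one j)) \<cdot> (cid C (ot ?A ?A) \<diamond> m (one j) (one j))"
  proof -
    have "?M \<cdot> (S (one i) \<diamond> cid C (ot ?A (ot ?B ?B))) =
        ?M \<cdot> ((S (one i) \<diamond> idg (one i)) \<diamond> cid C (ot ?B ?B))"
      by simp
    also have "\<dots> = ?Si \<diamond> m (one j) (one j)"
      by (subst interchange) auto
    also have "\<dots> = (?Si \<diamond> idg (one j)) \<cdot> (cid C (ot ?A ?A) \<diamond> m (one j) (one j))"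
      by (subst interchange) auto
    finally show ?thesis .
  qed
  have coproduct: "(cid C (ot ?A ?A) \<diamond> m (one j) (one j)) \<cdot> ?X \<cdot> sigma i j =
      (Delta (one i) \<diamond> idg (one j)) \<cdot> sigma i j"
    using copair_Delta_l[of i j] by simp
  have antipode: "(?Si \<diamond> idg (one j)) \<cdot> (Delta (one i) \<diamond> idg (one j)) =
      (eta i \<diamond> idg (one j)) \<cdot> (eps (one i) \<diamond> idg (one j))"
    using antipode_l[of "one i"] by (simp add: interchange cmp_assoc)
  have counit: "(eta i \<diamond> idg (one j)) \<cdot> (eps (one i) \<diamond> idg (one j)) \<cdot> sigma i j =
      eta i \<diamond> eta j"
    using copair_eps_l[of i j] by (simp add: point_mtn_cmp cmp_assoc[symmetric])
  have "mu_with (one i) (one j) (sigma i j) \<cdot> (S (one i) \<diamond> idg (one j)) \<cdot> sigma i j =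
      ?M \<cdot> ?X \<cdot> (S (one i) \<diamond> idg (one j)) \<cdot> sigma i j"
    by (simp add: mu_with_def cmp_assoc)
  also have "\<dots> = ?M \<cdot> (S (one i) \<diamond> cid C (ot ?A (ot ?B ?B))) \<cdot> ?X \<cdot> sigma i j"
    using slide by (simp add: cmp_reassoc)
  also have "\<dots> =
      (?Si \<diamond> idg (one j)) \<cdot> (cid C (ot ?A ?A) \<diamond> m (one j) (one j)) \<cdot> ?X \<cdot> sigma i j"
    using split by (simp add: cmp_reassoc)
  also have "\<dots> = (?Si \<diamond> idg (one j)) \<cdot> (Delta (one i) \<diamond> idg (one j)) \<cdot> sigma i j"
    using coproduct by simp
  also have "\<dots> = (eta i \<diamond> idg (one j)) \<cdot> (eps (one i) \<diamond> idg (one j)) \<cdot> sigma i j"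
    using antipode by (simp add: cmp_reassoc)
  also have "\<dots> = eta i \<diamond> eta j"
    using counit .
  finally show ?thesis .
qed

lemma sigma_left_inverse:
  "mu_with (one i) (one j) ((idg (one i) \<diamond> S (one j)) \<cdot> sigma i j) \<cdot> sigma i j = eta i \<diamond> eta j"
proof -
  let ?A = "H (one i)" and ?B = "H (one j)"
  let ?M = "m (one i) (one i) \<diamond> m (one j) (one j)" and ?X = "idg (one i) \<diamond> sigma i j \<diamond> idg (one j)"
  let ?Sj = "m (one j) (one j) \<cdot> (S (one j) \<diamond> idg (one j))"
  have slide: "idg (one i) \<diamond> ((idg (one i) \<diamond> S (one j)) \<cdot> sigma i j) \<diamond> idg (one j) =
      (cid C (ot ?A ?A) \<diamond> S (one j) \<diamond> idg (one j)) \<cdot> ?X"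
    using whisker_cmp[of "idg (one i) \<diamond> S (one j)" "sigma i j" ?A ?B] by simp
  have split: "?M \<cdot> (cid C (ot ?A ?A) \<diamond> S (one j) \<diamond> idg (one j)) =
      (idg (one i) \<diamond> ?Sj) \<cdot> (m (one i) (one i) \<diamond> cid C (ot ?B ?B))"
  proof -
    have "?M \<cdot> (cid C (ot ?A ?A) \<diamond> S (one j) \<diamond> idg (one j)) = m (one i) (one i) \<diamond> ?Sj"
      by (subst interchange) auto
    also have "\<dots> = (idg (one i) \<diamond> ?Sj) \<cdot> (m (one i) (one i) \<diamond> cid C (ot ?B ?B))"
      by (subst interchange) auto
    finally show ?thesis .
  qed
  have coproduct: "(m (one i) (one i) \<diamond> cid C (ot ?B ?B)) \<cdot> ?X \<cdot> sigma i j =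
      (idg (one i) \<diamond> Delta (one j)) \<cdot> sigma i j"
    using copair_Delta_r[of i j] by simp
  have antipode: "(idg (one i) \<diamond> ?Sj) \<cdot> (idg (one i) \<diamond> Delta (one j)) =
      (idg (one i) \<diamond> eta j) \<cdot> (idg (one i) \<diamond> eps (one j))"
    using antipode_l[of "one j"] by (simp add: interchange cmp_assoc)
  have counit: "(idg (one i) \<diamond> eta j) \<cdot> (idg (one i) \<diamond> eps (one j)) \<cdot> sigma i j =
      eta i \<diamond> eta j"
    using copair_eps_r[of i j] by (simp add: mtn_point_cmp cmp_assoc[symmetric])
  have "mu_with (one i) (one j) ((idg (one i) \<diamond> S (one j)) \<cdot> sigma i j) \<cdot> sigma i j =
      ?M \<cdot> (cid C (ot ?A ?A) \<diamond> S (one j) \<diamond> idg (one j)) \<cdot> ?X \<cdot> sigma i j"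
    unfolding mu_with_def slide by (simp add: cmp_assoc)
  also have "\<dots> =
      (idg (one i) \<diamond> ?Sj) \<cdot> (m (one i) (one i) \<diamond> cid C (ot ?B ?B)) \<cdot> ?X \<cdot> sigma i j"
    using split by (simp add: cmp_reassoc)
  also have "\<dots> = (idg (one i) \<diamond> ?Sj) \<cdot> (idg (one i) \<diamond> Delta (one j)) \<cdot> sigma i j"
    using coproduct by simp
  also have "\<dots> = (idg (one i) \<diamond> eta j) \<cdot> (idg (one i) \<diamond> eps (one j)) \<cdot> sigma i j"
    using antipode by (simp add: cmp_reassoc)
  also have "\<dots> = eta i \<diamond> eta j"
    using counit .
  finally show ?thesis .
qed

lemma S_sigma_left_eq_right:
  "(S (one i) \<diamond> idg (one j)) \<cdot> sigma i j = (idg (one i) \<diamond> S (one j)) \<cdot> sigma i j"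
  (is "?l = ?r")
proof -
  let ?M = "mu_with (one i) (one j)"
  \<comment> \<open>a left inverse equals a right inverse\<close>
  have "?M ?r \<cdot> ?M (sigma i j) = cid C (ot (H (one i)) (H (one j)))"
    using mu_with_mult[of ?r i j "sigma i j"] sigma_left_inverse mu_with_unit[of "one i" i "one j" j]
    by simp
  then have "?l = ?M ?r \<cdot> ?M (sigma i j) \<cdot> ?l"
    by (simp add: cmp_assoc[symmetric])
  also have "\<dots> = ?M ?r \<cdot> (eta i \<diamond> eta j)"
    using sigma_right_inverse by simp
  also have "\<dots> = ?r"
    by (simp add: mu_with_eta_eta)
  finally show ?thesis .
qed

lemma mu_inverse:
  assumes g: "tgt G g = i" and h: "src G h = j"
  defines "mu_inv \<equiv> mu_with g h ((idg (one i) \<diamond> S (one j)) \<cdot> sigma i j)"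
  shows "mu g h \<cdot> mu_inv = cid C (ot (H g) (H h))"
    and "mu_inv \<cdot> mu g h = cid C (ot (H g) (H h))"
  using mu_with_mult[of "sigma i j" i j _ g h] mu_with_mult[of _ i j "sigma i j" g h]
    sigma_right_inverse sigma_left_inverse S_sigma_left_eq_right mu_with_unit[OF g h]
  by (simp_all add: mu_inv_def mu_eq_mu_with g h)

end

theorem proposition6p5:
  fixes G :: "('o, 'g) grpd" and C :: "('c, 'm) bmc" and X :: "('o, 'g, 'c, 'm) hr"
  assumes "Hr_model G C X"
  shows "(\<forall>i j.
            cmp C (mtn C (SS X (gid G i)) (cid C (HH X (gid G j)))) (hr_syntax.sigma G C X i j)
          = cmp C (mtn C (cid C (HH X (gid G i))) (SS X (gid G j))) (hr_syntax.sigma G C X i j))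
       \<and> (\<forall>g h i j. gcomp G (ginv G g) g = gid G i \<longrightarrow> gcomp G h (ginv G h) = gid G j \<longrightarrow>
            (let muinv =
                 cmp C (mtn C (mm X g (gid G i)) (mm X (gid G j) h))
                   (mtn C (cid C (HH X g))
                      (mtn C (cmp C (mtn C (cid C (HH X (gid G i))) (SS X (gid G j)))
                                    (hr_syntax.sigma G C X i j))
                             (cid C (HH X h))))
             in cmp C (hr_syntax.mu G C X g h) muinv = cid C (otn C (HH X g) (HH X h))
              \<and> cmp C muinv (hr_syntax.mu G C X g h) = cid C (otn C (HH X g) (HH X h))))"
proof -
  interpret Hr_model G C X by (rule assms)
  show ?thesis
  proof (intro conjI allI impI)
    fix i j
    show "(S (one i) \<diamond> idg (one j)) \<cdot> sigma i j = (idg (one i) \<diamond> S (one j)) \<cdot> sigma i j"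
      by (rule S_sigma_left_eq_right)
  next
    fix g h i j
    assume "gm (gb g) g = one i" and "gm h (gb h) = one j"
    then have "tgt G g = i" and "src G h = j"
      by (simp_all add: groupoid_tgt_eq_if_ginv_gcomp groupoid_src_eq_if_gcomp_ginv)
    then show "let muinv = (m g (one i) \<diamond> m (one j) h) \<cdot>
                 (idg g \<diamond> ((idg (one i) \<diamond> S (one j)) \<cdot> sigma i j) \<diamond> idg h)
             in mu g h \<cdot> muinv = cid C (ot (H g) (H h)) \<and> muinv \<cdot> mu g h = cid C (ot (H g) (H h))"
      using mu_inverse unfolding mu_with_def Let_def by simp
  qed
qed

end
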